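(* Let $\mathcal U$ be a non-principal p-point ultrafilter on $\omega$ and let $\mathfrak I=\{\omega\setminus X\mid X\in\mathcal U\}$ be its dual ideal. Then the Grigorieff forcing $\mathbb P(\mathcal U)=\{p:\omega\to 2\mid \mathrm{dom}(p)\in\mathfrak I\}$, ordered by $q\le p$ iff $q\supseteq p$, does not satisfy Axiom A.
   Context: Here $p$ ranges over partial functions from $\omega$ to $2=\{0,1\}$. A partial order $(\mathbb P,\le)$ satisfies Axiom A if there are partial orders $\le_n$ ($n\in\omega$) on $\mathbb P$ such that: (i) $p\le_0 q$ implies $p\le q$; (ii) $p\le_{n+1}q$ implies $p\le_n q$; (iii) whenever $p_0\ge_0 p_1\ge_1 p_2\ge_2\cdots$ (a fusion sequence), there is $q\in\mathbb P$ with $q\le_n p_n$ for all $n$; (iv) for every $p\in\mathbb P$, every $n\in\omega$ and every $\mathbb P$-name $\dot\alpha$ for an ordinal, there are $q\le_n p$ and a countable set $B$ with $q\Vdash\dot\alpha\in B$. A p-point ultrafilter is a non-principal ultrafilter $\mathcal U$ on $\omega$ such that for every partition $\{J_n\mid n\in\omega\}$ of $\omega$ with each $J_n\notin\mathcal U$ there is $Y\in\mathcal U$ with $|Y\cap J_n|<\omega$ for all $n$. *)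

theory Defs
  imports Main "HOL-Library.Countable_Set"
begin

definition ultrafilter_on_nat :: "nat set set \<Rightarrow> bool" where
  "ultrafilter_on_nat U \<longleftrightarrow>
     UNIV \<in> U \<and> {} \<notin> U \<and>
     (\<forall>X Y. X \<in> U \<and> X \<subseteq> Y \<longrightarrow> Y \<in> U) \<and>
     (\<forall>X Y. X \<in> U \<and> Y \<in> U \<longrightarrow> X \<inter> Y \<in> U) \<and>
     (\<forall>X. X \<in> U \<or> - X \<in> U)"

definition principal_on_nat :: "nat set set \<Rightarrow> bool" where
  "principal_on_nat U \<longleftrightarrow> (\<exists>n. U = {X. n \<in> X})"

definition nonprincipal_ultrafilter :: "nat set set \<Rightarrow> bool" where
  "nonprincipal_ultrafilter U \<longleftrightarrow> ultrafilter_on_nat U \<and> \<not> principal_on_nat U"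

definition is_partition_of_nat :: "(nat \<Rightarrow> nat set) \<Rightarrow> bool" where
  "is_partition_of_nat J \<longleftrightarrow> (\<Union>n. J n) = UNIV \<and> (\<forall>m n. m \<noteq> n \<longrightarrow> J m \<inter> J n = {})"

definition p_point :: "nat set set \<Rightarrow> bool" where
  "p_point U \<longleftrightarrow> nonprincipal_ultrafilter U \<and>
     (\<forall>J. is_partition_of_nat J \<and> (\<forall>n. J n \<notin> U) \<longrightarrow>
        (\<exists>Y\<in>U. \<forall>n. finite (Y \<inter> J n)))"

definition dual_ideal :: "nat set set \<Rightarrow> nat set set" where
  "dual_ideal U = {UNIV - X | X. X \<in> U}"

definition grigorieff :: "nat set set \<Rightarrow> (nat \<rightharpoonup> bool) set" where
  "grigorieff U = {p. dom p \<in> dual_ideal U}"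

definition grig_le :: "(nat \<rightharpoonup> bool) \<Rightarrow> (nat \<rightharpoonup> bool) \<Rightarrow> bool" where
  "grig_le q p \<longleftrightarrow> p \<subseteq>\<^sub>m q"

text \<open>Axiom A (Baumgartner) for a partial order (P, le), where le q p means q \<le> p.
  Clause (iv) is stated in its combinatorial antichain form: for every antichain A,
  every p and n there is q \<le>_n p compatible with only countably many members of A.\<close>

definition partial_order_on' :: "'a set \<Rightarrow> ('a \<Rightarrow> 'a \<Rightarrow> bool) \<Rightarrow> bool" where
  "partial_order_on' P r \<longleftrightarrow>
     (\<forall>p\<in>P. r p p) \<and>
     (\<forall>p\<in>P. \<forall>q\<in>P. r p q \<and> r q p \<longrightarrow> p = q) \<and>
     (\<forall>p\<in>P. \<forall>q\<in>P. \<forall>s\<in>P. r p q \<and> r q s \<longrightarrow> r p s)"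

definition compatible_in :: "'a set \<Rightarrow> ('a \<Rightarrow> 'a \<Rightarrow> bool) \<Rightarrow> 'a \<Rightarrow> 'a \<Rightarrow> bool" where
  "compatible_in P le p q \<longleftrightarrow> (\<exists>r\<in>P. le r p \<and> le r q)"

definition antichain_in :: "'a set \<Rightarrow> ('a \<Rightarrow> 'a \<Rightarrow> bool) \<Rightarrow> 'a set \<Rightarrow> bool" where
  "antichain_in P le A \<longleftrightarrow> A \<subseteq> P \<and>
     (\<forall>a\<in>A. \<forall>b\<in>A. a \<noteq> b \<longrightarrow> \<not> compatible_in P le a b)"

definition axiom_A :: "'a set \<Rightarrow> ('a \<Rightarrow> 'a \<Rightarrow> bool) \<Rightarrow> bool" where
  "axiom_A P le \<longleftrightarrow>
    (\<exists>len :: nat \<Rightarrow> 'a \<Rightarrow> 'a \<Rightarrow> bool.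
       (\<forall>n. partial_order_on' P (len n)) \<and>
       (\<forall>p\<in>P. \<forall>q\<in>P. len 0 p q \<longrightarrow> le p q) \<and>
       (\<forall>n. \<forall>p\<in>P. \<forall>q\<in>P. len (Suc n) p q \<longrightarrow> len n p q) \<and>
       (\<forall>s :: nat \<Rightarrow> 'a. (\<forall>n. s n \<in> P) \<and> (\<forall>n. len n (s (Suc n)) (s n)) \<longrightarrow>
           (\<exists>q\<in>P. \<forall>n. len n q (s n))) \<and>
       (\<forall>p\<in>P. \<forall>n. \<forall>A. antichain_in P le A \<longrightarrow>
           (\<exists>q\<in>P. len n q p \<and> countable {a\<in>A. compatible_in P le q a})))"

end

theory Submission
  imports Defs "HOL-Library.Equipollence" "HOL-Library.Disjoint_Sets"
begin

(* Let orders \<le>\<^sub>n witness Axiom A for P(U). Applying clause (iv) to the antichain of all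
   extensions of r with domain dom r \<union> X, for some X \<notin> U, yields q \<le>\<^sub>n r with X - dom q
   finite: otherwise q is compatible with continuum many members of the antichain. If
   infinitely many disjoint finite sets could not be added to the domain of any
   q \<le>\<^sub>n r, the union of the even- or of the odd-indexed ones would be such an X, which
   is absurd; so for every r and n there is a finite obstruction T such that every finite
   set disjoint from T is added to the domain by some q \<le>\<^sub>n r.
   Two fusion sequences are now built side by side, step k of each filling in an initial
   segment of \<omega> except the current obstruction, and each segment reaching beyond all
   obstructions met so far by either sequence. Then only finitely many points lie outside
   the domains of both fusions, although both complements of these domains belong to U. *)

lemma uncountable_Pow_infinite:
  assumes "infinite A"
  shows "uncountable (Pow A)"
proof
  assume "countable (Pow A)"
  then have "Pow A \<lesssim> (UNIV :: nat set)"
    unfolding countable_def lepoll_def by blast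
  also have "(UNIV :: nat set) \<lesssim> A"
    using assms by (simp add: infinite_le_lepoll)
  finally have "A \<prec> A"
    using lesspoll_Pow_self lesspoll_trans2 by blast
  then show False by simp
qed

lemma nat_crossing:
  fixes f :: "nat \<Rightarrow> nat"
  assumes "f 0 \<le> x" and "x < f n"
  obtains i where "f i \<le> x" and "x < f (Suc i)"
  using assms(2)
proof (induction n)
  case 0
  then show ?case using assms(1) by simp
next
  case (Suc n)
  then show ?case by (cases "x < f n") (auto simp: not_less)
qed

definition strict_bound :: "nat \<Rightarrow> nat set \<Rightarrow> nat" where
  "strict_bound m S = Suc (Max (insert m S))"

lemma strict_bound_greater: "finite S \<Longrightarrow> m < strict_bound m S"
  and strict_bound_bounds: "finite S \<Longrightarrow> S \<subseteq> {..<strict_bound m S}"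
  unfolding strict_bound_def by (auto simp: less_Suc_eq_le)

lemma interleaved_covers_leave_bounded:
  fixes ta tb :: "nat \<Rightarrow> nat" and Tb Tc :: "nat \<Rightarrow> nat set"
  assumes cover_b: "\<And>k. {..<ta k} - Tb k \<subseteq> Db"
    and cover_c: "\<And>k. {..<tb k} - Tc k \<subseteq> Dc"
    and Tb_below: "\<And>j k. j \<le> Suc k \<Longrightarrow> Tb j \<subseteq> {..<tb k}"
    and Tc_below: "\<And>j k. j \<le> k \<Longrightarrow> Tc j \<subseteq> {..<ta k}"
    and ta_unbounded: "\<And>x. \<exists>k. x < ta k"
    and tb_unbounded: "\<And>x. \<exists>k. x < tb k"
  shows "- Db \<inter> - Dc \<subseteq> {..<max (ta 0) (tb 0)}"
proof
  fix x assume x: "x \<in> - Db \<inter> - Dc"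
  show "x \<in> {..<max (ta 0) (tb 0)}"
  proof (rule ccontr)
    assume "x \<notin> {..<max (ta 0) (tb 0)}"
    then have "ta 0 \<le> x" "tb 0 \<le> x" by auto
    obtain i where i: "ta i \<le> x" "x < ta (Suc i)"
      using nat_crossing[of ta x] \<open>ta 0 \<le> x\<close> ta_unbounded by metis
    obtain j where j: "tb j \<le> x" "x < tb (Suc j)"
      using nat_crossing[of tb x] \<open>tb 0 \<le> x\<close> tb_unbounded by metis
    have "x \<in> Tb (Suc i)" using cover_b[of "Suc i"] i(2) x by blast
    moreover have "x \<in> Tc (Suc j)" using cover_c[of "Suc j"] j(2) x by blast
    \<comment> \<open>if \<open>i \<le> j\<close> then \<open>tb j \<le> x\<close> already exceeds \<open>Tb (Suc i)\<close>,
      otherwise \<open>ta i \<le> x\<close> exceeds \<open>Tc (Suc j)\<close>\<close>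
    ultimately show False
      using Tb_below[of "Suc i" j] Tc_below[of "Suc j" i] i(1) j(1)
      by (cases "i \<le> j") auto
  qed
qed

lemma disjoint_family_avoiding_finite_sets:
  assumes "\<And>T. finite T \<Longrightarrow> \<exists>F. finite F \<and> F \<inter> T = {} \<and> Q F"
  obtains F :: "nat \<Rightarrow> 'a set" where "disjoint_family F" and "\<And>i. Q (F i)"
proof -
  obtain G where G: "\<And>T. finite T \<Longrightarrow> finite (G T) \<and> G T \<inter> T = {} \<and> Q (G T)"
    using assms by metis
  define used where "used = rec_nat {} (\<lambda>_ T. T \<union> G T)"
  have used_Suc: "used (Suc i) = used i \<union> G (used i)" for i
    by (simp add: used_def)
  have finite_used: "finite (used i)" for i
    by (induction i) (simp_all add: used_def G)
  have earlier_used: "G (used i) \<subseteq> used j" if "i < j" for i j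
    using that
  proof (induction j)
    case (Suc j)
    then show ?case by (auto simp: used_Suc less_Suc_eq)
  qed simp
  have "disjoint_family (\<lambda>i. G (used i))"
    unfolding disjoint_family_on_def
  proof (intro ballI impI)
    fix i j :: nat assume "i \<noteq> j"
    then consider "i < j" | "j < i" by linarith
    then show "G (used i) \<inter> G (used j) = {}"
      by cases (use earlier_used G finite_used in blast)+
  qed
  then show ?thesis
    using that G finite_used by blast
qed

lemma finite_indices_meeting_finite_set:
  assumes "disjoint_family F" and "finite B" and "\<And>i. i \<in> S \<Longrightarrow> F i \<inter> B \<noteq> {}"
  shows "finite S"
proof -
  have "inj_on (\<lambda>i. F i \<inter> B) S"
  proof (rule inj_onI)
    fix i j assume "i \<in> S" "j \<in> S" "F i \<inter> B = F j \<inter> B"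
    then show "i = j"
      using assms(1,3) disjoint_family_onD[OF assms(1)] by blast
  qed
  moreover have "(\<lambda>i. F i \<inter> B) ` S \<subseteq> Pow B" by blast
  ultimately show ?thesis
    using assms(2) finite_imageD finite_subset by (metis finite_Pow_iff)
qed

lemma ultrafilter_on_nat_Int: "ultrafilter_on_nat U \<Longrightarrow> X \<in> U \<Longrightarrow> Y \<in> U \<Longrightarrow> X \<inter> Y \<in> U"
  and ultrafilter_on_nat_mono: "ultrafilter_on_nat U \<Longrightarrow> X \<in> U \<Longrightarrow> X \<subseteq> Y \<Longrightarrow> Y \<in> U"
  and ultrafilter_on_nat_Compl: "ultrafilter_on_nat U \<Longrightarrow> X \<notin> U \<Longrightarrow> - X \<in> U"
  and ultrafilter_on_nat_empty: "ultrafilter_on_nat U \<Longrightarrow> {} \<notin> U"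
  and ultrafilter_on_nat_UNIV: "ultrafilter_on_nat U \<Longrightarrow> UNIV \<in> U"
  unfolding ultrafilter_on_nat_def by blast+

lemma ultrafilter_on_nat_disjoint: "ultrafilter_on_nat U \<Longrightarrow> X \<in> U \<Longrightarrow> X \<inter> Y = {} \<Longrightarrow> Y \<notin> U"
  by (metis ultrafilter_on_nat_Int ultrafilter_on_nat_empty)

lemma nonprincipal_ultrafilter_singleton:
  assumes U: "ultrafilter_on_nat U" and "\<not> principal_on_nat U"
  shows "{x} \<notin> U"
proof
  assume x: "{x} \<in> U"
  have "U = {X. x \<in> X}"
  proof (intro set_eqI iffI)
    fix X assume "X \<in> U"
    then show "X \<in> {X. x \<in> X}"
      using x ultrafilter_on_nat_disjoint[OF U] by blast
  next
    fix X assume "X \<in> {X. x \<in> X}"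
    then show "X \<in> U" using x ultrafilter_on_nat_mono[OF U] by blast
  qed
  then show False using assms(2) unfolding principal_on_nat_def by blast
qed

lemma nonprincipal_ultrafilter_finite:
  assumes U: "ultrafilter_on_nat U" and "\<not> principal_on_nat U" and "finite F"
  shows "F \<notin> U"
  using assms(3)
proof (induction F rule: finite_induct)
  case empty
  then show ?case using ultrafilter_on_nat_empty[OF U] .
next
  case (insert x F)
  have "- {x} \<inter> - F \<in> U"
    using nonprincipal_ultrafilter_singleton[OF assms(1,2)] insert.IH
    by (simp add: ultrafilter_on_nat_Compl ultrafilter_on_nat_Int U)
  then show ?case using ultrafilter_on_nat_disjoint[OF U] by blast
qed

lemma ultrafilter_on_nat_disjoint_family_half:
  fixes F :: "nat \<Rightarrow> nat set"
  assumes U: "ultrafilter_on_nat U" and "disjoint_family F"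
  obtains S where "infinite S" and "(\<Union>i\<in>S. F i) \<notin> U"
proof -
  have disjoint: "(\<Union>i\<in>{i. even i}. F i) \<inter> (\<Union>i\<in>{i. odd i}. F i) = {}"
  proof (rule equals0I)
    fix x assume "x \<in> (\<Union>i\<in>{i. even i}. F i) \<inter> (\<Union>i\<in>{i. odd i}. F i)"
    then obtain i j where "even i" "odd j" "x \<in> F i" "x \<in> F j" by blast
    moreover from \<open>even i\<close> \<open>odd j\<close> have "i \<noteq> j" by auto
    ultimately show False using disjoint_family_onD[OF assms(2)] by blast
  qed
  have even_infinite: "infinite {i::nat. even i}"
  proof -
    have "\<exists>n>m. n \<in> {i::nat. even i}" for m by (rule exI[of _ "2 * m + 2"]) simp
    then show ?thesis unfolding infinite_nat_iff_unbounded by blast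
  qed
  have odd_infinite: "infinite {i::nat. odd i}"
  proof -
    have "\<exists>n>m. n \<in> {i::nat. odd i}" for m by (rule exI[of _ "2 * m + 1"]) simp
    then show ?thesis unfolding infinite_nat_iff_unbounded by blast
  qed
  show ?thesis
  proof (cases "(\<Union>i\<in>{i. even i}. F i) \<in> U")
    case True
    show ?thesis using that[OF odd_infinite] ultrafilter_on_nat_disjoint[OF U True disjoint] .
  qed (use that[OF even_infinite] in blast)
qed

lemma grigorieff_iff: "p \<in> grigorieff U \<longleftrightarrow> - dom p \<in> U"
proof
  assume "p \<in> grigorieff U"
  then obtain X where "X \<in> U" and "dom p = - X"
    unfolding grigorieff_def dual_ideal_def by (auto simp: Compl_eq_Diff_UNIV)
  then show "- dom p \<in> U" by simp
next
  assume "- dom p \<in> U"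
  then show "p \<in> grigorieff U"
    unfolding grigorieff_def dual_ideal_def by (auto simp: Compl_eq_Diff_UNIV intro!: exI[of _ "- dom p"])
qed

lemma grig_compatible_agree:
  assumes "compatible_in P grig_le p q" and "x \<in> dom p" and "x \<in> dom q"
  shows "p x = q x"
proof -
  obtain s where "p \<subseteq>\<^sub>m s" and "q \<subseteq>\<^sub>m s"
    using assms(1) unfolding compatible_in_def grig_le_def by blast
  then show ?thesis using assms(2,3) unfolding map_le_def by metis
qed

lemma grig_antichain_same_dom:
  assumes "A \<subseteq> P" and "\<And>p. p \<in> A \<Longrightarrow> dom p = D"
  shows "antichain_in P grig_le A"
  unfolding antichain_in_def
proof (intro conjI ballI impI assms(1) notI)
  fix p q assume "p \<in> A" "q \<in> A" "p \<noteq> q" "compatible_in P grig_le p q"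
  have "p x = q x" for x
  proof (cases "x \<in> dom p")
    case True
    then show ?thesis
      using grig_compatible_agree[OF \<open>compatible_in P grig_le p q\<close>] assms(2) \<open>p \<in> A\<close> \<open>q \<in> A\<close>
      by simp
  next
    case False
    then show ?thesis using assms(2) \<open>p \<in> A\<close> \<open>q \<in> A\<close> by (metis domIff)
  qed
  then show False using \<open>p \<noteq> q\<close> by blast
qed

lemma Pow_lepoll_compatible_extensions:
  assumes U: "ultrafilter_on_nat U" and q: "q \<in> grigorieff U" and rq: "r \<subseteq>\<^sub>m q"
    and XU: "- X \<inter> - dom r \<in> U"
  shows "Pow (X - dom q) \<lesssim> {p \<in> grigorieff U. r \<subseteq>\<^sub>m p \<and> dom p = dom r \<union> X \<and>
    compatible_in (grigorieff U) grig_le q p}"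
proof -
  define W where "W = X - dom q"
  define D where "D = dom r \<union> X"
  define choice where "choice Z = q ++ (\<lambda>x. if x \<in> W then Some (x \<in> Z) else None)" for Z
  have dom_choice: "dom (choice Z) = dom q \<union> W" for Z
    by (auto simp: choice_def split: if_splits)
  have choice_in: "choice Z \<in> grigorieff U" for Z
  proof -
    have "- X \<inter> - dom r \<inter> - dom q \<subseteq> - dom (choice Z)"
      by (auto simp: dom_choice W_def)
    moreover have "- X \<inter> - dom r \<inter> - dom q \<in> U"
      using ultrafilter_on_nat_Int[OF U XU] q by (simp add: grigorieff_iff)
    ultimately show ?thesis
      using ultrafilter_on_nat_mono[OF U] by (simp add: grigorieff_iff)
  qed
  have "choice Z |` D \<in> {p \<in> grigorieff U. r \<subseteq>\<^sub>m p \<and> dom p = D \<and>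
    compatible_in (grigorieff U) grig_le q p}" for Z
  proof -
    have "r \<subseteq>\<^sub>m choice Z |` D"
      using rq map_le_implies_dom_le[OF rq]
      by (auto simp: map_le_def choice_def D_def W_def restrict_map_def map_add_def)
    moreover have "dom (choice Z |` D) = D"
      using map_le_implies_dom_le[OF rq] by (auto simp: dom_choice D_def W_def)
    moreover have "choice Z |` D \<in> grigorieff U"
    proof -
      have "- X \<inter> - dom r \<subseteq> - dom (choice Z |` D)"
        using \<open>dom (choice Z |` D) = D\<close> by (auto simp: D_def)
      then show ?thesis
        using ultrafilter_on_nat_mono[OF U XU] by (simp add: grigorieff_iff)
    qed
    moreover have "q \<subseteq>\<^sub>m choice Z"
      by (auto simp: map_le_def choice_def W_def map_add_def)
    moreover have "choice Z |` D \<subseteq>\<^sub>m choice Z"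
      by (auto simp: map_le_def restrict_map_def)
    ultimately show ?thesis
      using choice_in by (auto simp: compatible_in_def grig_le_def)
  qed
  moreover have "inj_on (\<lambda>Z. choice Z |` D) (Pow W)"
  proof (rule inj_onI)
    fix Z Z' assume "Z \<in> Pow W" "Z' \<in> Pow W" and eq: "choice Z |` D = choice Z' |` D"
    have "x \<in> Z \<longleftrightarrow> x \<in> Z'" if "x \<in> W" for x
      using fun_cong[OF eq, of x] that by (auto simp: choice_def W_def D_def)
    then show "Z = Z'" using \<open>Z \<in> Pow W\<close> \<open>Z' \<in> Pow W\<close> by blast
  qed
  ultimately show ?thesis
    unfolding lepoll_def W_def D_def by blast
qed

locale grigorieff_axiom_A =
  fixes U :: "nat set set"
    and len :: "nat \<Rightarrow> (nat \<rightharpoonup> bool) \<Rightarrow> (nat \<rightharpoonup> bool) \<Rightarrow> bool"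
  assumes ultrafilter: "ultrafilter_on_nat U"
    and nonprincipal: "\<not> principal_on_nat U"
    and len_extends: "p \<in> grigorieff U \<Longrightarrow> q \<in> grigorieff U \<Longrightarrow> len n q p \<Longrightarrow> p \<subseteq>\<^sub>m q"
    and fusion: "(\<And>n. s n \<in> grigorieff U) \<Longrightarrow> (\<And>n. len n (s (Suc n)) (s n)) \<Longrightarrow>
      \<exists>q\<in>grigorieff U. \<forall>n. len n q (s n)"
    and countably_compatible: "p \<in> grigorieff U \<Longrightarrow> antichain_in (grigorieff U) grig_le A \<Longrightarrow>
      \<exists>q\<in>grigorieff U. len n q p \<and> countable {a\<in>A. compatible_in (grigorieff U) grig_le q a}"
begin

abbreviation "P \<equiv> grigorieff U"

lemma len_dom_subset: "p \<in> P \<Longrightarrow> q \<in> P \<Longrightarrow> len n q p \<Longrightarrow> dom p \<subseteq> dom q"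
  using len_extends map_le_implies_dom_le by blast

lemma extension_covering_almost:
  assumes r: "r \<in> P" and X: "X \<notin> U"
  obtains q where "q \<in> P" and "len n q r" and "finite (X - dom q)"
proof -
  define A where "A = {p \<in> P. r \<subseteq>\<^sub>m p \<and> dom p = dom r \<union> X}"
  have "antichain_in P grig_le A"
    by (rule grig_antichain_same_dom) (auto simp: A_def)
  then obtain q where q: "q \<in> P" "len n q r"
    and countable: "countable {a\<in>A. compatible_in P grig_le q a}"
    using countably_compatible[OF r] by blast
  have "- X \<inter> - dom r \<in> U"
    using r X by (simp add: grigorieff_iff ultrafilter_on_nat_Compl ultrafilter_on_nat_Int ultrafilter)
  then have "Pow (X - dom q) \<lesssim> {a\<in>A. compatible_in P grig_le q a}"
    using Pow_lepoll_compatible_extensions[OF ultrafilter q(1) len_extends[OF r q]]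
    unfolding A_def by (simp add: conj_assoc)
  then have "countable (Pow (X - dom q))"
    using countable countable_lepoll by blast
  then show ?thesis
    using that q uncountable_Pow_infinite by blast
qed

definition coverable :: "nat \<Rightarrow> (nat \<rightharpoonup> bool) \<Rightarrow> nat set \<Rightarrow> bool" where
  "coverable n r F \<longleftrightarrow> (\<exists>q\<in>P. len n q r \<and> F \<subseteq> dom q)"

lemma finite_obstruction:
  assumes r: "r \<in> P"
  shows "\<exists>T. finite T \<and> (\<forall>F. finite F \<longrightarrow> F \<inter> T = {} \<longrightarrow> coverable n r F)"
proof (rule ccontr)
  assume "\<not> ?thesis"
  then have "\<exists>F. finite F \<and> F \<inter> T = {} \<and> \<not> coverable n r F" if "finite T" for T
    using that by blast
  then obtain F :: "nat \<Rightarrow> nat set" where disjoint: "disjoint_family F"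
    and uncoverable: "\<And>i. \<not> coverable n r (F i)"
    using disjoint_family_avoiding_finite_sets[of "\<lambda>F. \<not> coverable n r F"] by metis
  obtain S where S: "infinite S" and X: "(\<Union>i\<in>S. F i) \<notin> U"
    using ultrafilter_on_nat_disjoint_family_half[OF ultrafilter disjoint] .
  obtain q where q: "q \<in> P" "len n q r" and fin: "finite ((\<Union>i\<in>S. F i) - dom q)"
    using extension_covering_almost[OF r X] .
  have "F i \<inter> ((\<Union>i\<in>S. F i) - dom q) \<noteq> {}" if "i \<in> S" for i
    using uncoverable[of i] q that unfolding coverable_def by blast
  then have "finite S"
    using finite_indices_meeting_finite_set[OF disjoint fin] by blast
  then show False using S by contradiction
qed

definition obstruction :: "(nat \<rightharpoonup> bool) \<Rightarrow> nat \<Rightarrow> nat set" where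
  "obstruction r n = (SOME T. finite T \<and> (\<forall>F. finite F \<longrightarrow> F \<inter> T = {} \<longrightarrow> coverable n r F))"

lemma finite_obstruction_set: "r \<in> P \<Longrightarrow> finite (obstruction r n)"
  and coverable_obstruction: "r \<in> P \<Longrightarrow> finite F \<Longrightarrow> F \<inter> obstruction r n = {} \<Longrightarrow> coverable n r F"
  using someI_ex[OF finite_obstruction] unfolding obstruction_def by blast+

definition extension :: "(nat \<rightharpoonup> bool) \<Rightarrow> nat \<Rightarrow> nat \<Rightarrow> (nat \<rightharpoonup> bool)" where
  "extension r n m = (SOME q. q \<in> P \<and> len n q r \<and> {..<m} - obstruction r n \<subseteq> dom q)"

lemma extension:
  assumes "r \<in> P"
  shows "extension r n m \<in> P" and "len n (extension r n m) r"
    and "{..<m} - obstruction r n \<subseteq> dom (extension r n m)"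
proof -
  have "\<exists>q. q \<in> P \<and> len n q r \<and> {..<m} - obstruction r n \<subseteq> dom q"
    using coverable_obstruction[OF assms, of "{..<m} - obstruction r n"]
    unfolding coverable_def by blast
  from someI_ex[OF this]
  show "extension r n m \<in> P" and "len n (extension r n m) r"
    and "{..<m} - obstruction r n \<subseteq> dom (extension r n m)"
    unfolding extension_def by blast+
qed

\<comment> \<open>The thresholds interleave, \<open>bound_b k < bound_c k < bound_b (Suc k)\<close>, and each exceeds every
  obstruction met so far by either sequence.\<close>
primrec stage :: "nat \<Rightarrow> (nat \<rightharpoonup> bool) \<times> (nat \<rightharpoonup> bool) \<times> nat" where
  "stage 0 = (Map.empty, Map.empty, 0)"
| "stage (Suc k) =
    (let (b, c, t) = stage k;
         tb = strict_bound t (obstruction b k \<union> obstruction c k);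
         b' = extension b k tb;
         tc = strict_bound tb (obstruction b' (Suc k))
     in (b', extension c k tc, tc))"

definition seq_b :: "nat \<Rightarrow> (nat \<rightharpoonup> bool)" where
  "seq_b k = fst (stage k)"

definition seq_c :: "nat \<Rightarrow> (nat \<rightharpoonup> bool)" where
  "seq_c k = fst (snd (stage k))"

definition bound_b :: "nat \<Rightarrow> nat" where
  "bound_b k = strict_bound (snd (snd (stage k))) (obstruction (seq_b k) k \<union> obstruction (seq_c k) k)"

definition bound_c :: "nat \<Rightarrow> nat" where
  "bound_c k = strict_bound (bound_b k) (obstruction (seq_b (Suc k)) (Suc k))"

lemma seq_b_0: "seq_b 0 = Map.empty" and seq_c_0: "seq_c 0 = Map.empty"
  by (simp_all add: seq_b_def seq_c_def)

lemma seq_b_Suc: "seq_b (Suc k) = extension (seq_b k) k (bound_b k)"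
  and seq_c_Suc: "seq_c (Suc k) = extension (seq_c k) k (bound_c k)"
  and bound_b_Suc: "bound_b (Suc k) =
    strict_bound (bound_c k) (obstruction (seq_b (Suc k)) (Suc k) \<union> obstruction (seq_c (Suc k)) (Suc k))"
  by (simp_all add: seq_b_def seq_c_def bound_b_def bound_c_def split_beta Let_def)

lemma seqs_in_P: "seq_b k \<in> P \<and> seq_c k \<in> P"
proof (induction k)
  case 0
  show ?case by (simp add: seq_b_0 seq_c_0 grigorieff_iff ultrafilter_on_nat_UNIV ultrafilter)
next
  case (Suc k)
  then show ?case by (simp add: seq_b_Suc seq_c_Suc extension(1))
qed

lemma seq_b_step: "len k (seq_b (Suc k)) (seq_b k)"
    "{..<bound_b k} - obstruction (seq_b k) k \<subseteq> dom (seq_b (Suc k))"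
  and seq_c_step: "len k (seq_c (Suc k)) (seq_c k)"
    "{..<bound_c k} - obstruction (seq_c k) k \<subseteq> dom (seq_c (Suc k))"
  using seqs_in_P[of k] by (simp_all add: seq_b_Suc seq_c_Suc extension(2,3))

lemma obstructions_below_bound_b:
  "obstruction (seq_b k) k \<union> obstruction (seq_c k) k \<subseteq> {..<bound_b k}"
proof -
  have "finite (obstruction (seq_b k) k \<union> obstruction (seq_c k) k)"
    using seqs_in_P[of k] by (simp add: finite_obstruction_set)
  then show ?thesis unfolding bound_b_def by (rule strict_bound_bounds)
qed

lemma obstruction_below_bound_c: "obstruction (seq_b (Suc k)) (Suc k) \<subseteq> {..<bound_c k}"
  using seqs_in_P[of "Suc k"] unfolding bound_c_def by (simp add: strict_bound_bounds finite_obstruction_set)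

lemma bound_b_less_bound_c: "bound_b k < bound_c k"
  and bound_c_less_bound_b: "bound_c k < bound_b (Suc k)"
  using seqs_in_P[of "Suc k"]
  by (simp_all add: bound_c_def bound_b_Suc strict_bound_greater finite_obstruction_set)

lemma strict_mono_bound_b: "strict_mono bound_b"
  and strict_mono_bound_c: "strict_mono bound_c"
  unfolding strict_mono_Suc_iff
  using less_trans[OF bound_b_less_bound_c bound_c_less_bound_b]
    less_trans[OF bound_c_less_bound_b bound_b_less_bound_c] by blast+

lemma inconsistent: False
proof -
  obtain qb where qb: "qb \<in> P" "\<And>k. len k qb (seq_b k)"
    using fusion[of seq_b] seqs_in_P seq_b_step(1) by blast
  obtain qc where qc: "qc \<in> P" "\<And>k. len k qc (seq_c k)"
    using fusion[of seq_c] seqs_in_P seq_c_step(1) by blast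
  have "- dom qb \<inter> - dom qc \<subseteq> {..<max (bound_b 0) (bound_c 0)}"
  proof (rule interleaved_covers_leave_bounded)
    show "{..<bound_b k} - obstruction (seq_b k) k \<subseteq> dom qb" for k
      using seq_b_step(2) len_dom_subset[OF _ qb(1,2)] seqs_in_P by blast
    show "{..<bound_c k} - obstruction (seq_c k) k \<subseteq> dom qc" for k
      using seq_c_step(2) len_dom_subset[OF _ qc(1,2)] seqs_in_P by blast
    show "obstruction (seq_b j) j \<subseteq> {..<bound_c k}" if "j \<le> Suc k" for j k
    proof (cases j)
      case 0
      have "bound_b 0 < bound_c k"
        using bound_b_less_bound_c[of 0] strict_mono_less_eq[OF strict_mono_bound_c, of 0 k] by simp
      then show ?thesis using obstructions_below_bound_b[of 0] 0 by auto
    next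
      case (Suc i)
      then have "bound_c i \<le> bound_c k"
        using that strict_mono_less_eq[OF strict_mono_bound_c] by simp
      then show ?thesis using obstruction_below_bound_c[of i] Suc by auto
    qed
    show "obstruction (seq_c j) j \<subseteq> {..<bound_b k}" if "j \<le> k" for j k
    proof -
      have "bound_b j \<le> bound_b k"
        using that strict_mono_less_eq[OF strict_mono_bound_b] by simp
      then show ?thesis using obstructions_below_bound_b[of j] by auto
    qed
    show "\<exists>k. x < bound_b k" for x
      using strict_mono_imp_increasing[OF strict_mono_bound_b, of "Suc x"] Suc_le_lessD by blast
    show "\<exists>k. x < bound_c k" for x
      using strict_mono_imp_increasing[OF strict_mono_bound_c, of "Suc x"] Suc_le_lessD by blast
  qed
  then have "finite (- dom qb \<inter> - dom qc)"
    by (rule finite_subset) simp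
  moreover have "- dom qb \<inter> - dom qc \<in> U"
    using qb(1) qc(1) by (simp add: grigorieff_iff ultrafilter_on_nat_Int ultrafilter)
  ultimately show False
    using nonprincipal_ultrafilter_finite[OF ultrafilter nonprincipal] by blast
qed

end

lemma grigorieff_axiom_A_if_axiom_A:
  assumes U: "nonprincipal_ultrafilter U" and A: "axiom_A (grigorieff U) grig_le"
  obtains len where "grigorieff_axiom_A U len"
proof -
  obtain len where le0: "\<forall>p\<in>grigorieff U. \<forall>q\<in>grigorieff U. len 0 p q \<longrightarrow> grig_le p q"
    and le_Suc: "\<forall>n. \<forall>p\<in>grigorieff U. \<forall>q\<in>grigorieff U. len (Suc n) p q \<longrightarrow> len n p q"
    and fusion: "\<forall>s. (\<forall>n. s n \<in> grigorieff U) \<and> (\<forall>n. len n (s (Suc n)) (s n)) \<longrightarrow>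
      (\<exists>q\<in>grigorieff U. \<forall>n. len n q (s n))"
    and antichain: "\<forall>p\<in>grigorieff U. \<forall>n. \<forall>A. antichain_in (grigorieff U) grig_le A \<longrightarrow>
      (\<exists>q\<in>grigorieff U. len n q p \<and> countable {a\<in>A. compatible_in (grigorieff U) grig_le q a})"
    using A unfolding axiom_A_def by blast
  have len_0: "len 0 q p" if "p \<in> grigorieff U" "q \<in> grigorieff U" "len n q p" for n p q
    using that(3) by (induction n) (use that(1,2) le_Suc in blast)+
  show ?thesis
  proof (rule that[of len], unfold_locales)
    show "ultrafilter_on_nat U" "\<not> principal_on_nat U"
      using U unfolding nonprincipal_ultrafilter_def by blast+
    show "p \<subseteq>\<^sub>m q" if "p \<in> grigorieff U" "q \<in> grigorieff U" "len n q p" for n p q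
      using le0 len_0[OF that] that(1,2) unfolding grig_le_def by blast
    show "\<exists>q\<in>grigorieff U. \<forall>n. len n q (s n)"
      if "\<And>n. s n \<in> grigorieff U" "\<And>n. len n (s (Suc n)) (s n)" for s
      using fusion that by blast
    show "\<exists>q\<in>grigorieff U. len n q p \<and> countable {a\<in>A. compatible_in (grigorieff U) grig_le q a}"
      if "p \<in> grigorieff U" "antichain_in (grigorieff U) grig_le A" for p A n
      using antichain that by blast
  qed
qed

theorem theorem1:
  fixes U :: "nat set set"
  assumes "p_point U"
  shows "\<not> axiom_A (grigorieff U) grig_le"
proof
  assume "axiom_A (grigorieff U) grig_le"
  moreover have "nonprincipal_ultrafilter U"
    using assms unfolding p_point_def by blast
  ultimately obtain len where "grigorieff_axiom_A U len"
    using grigorieff_axiom_A_if_axiom_A by blast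
  then show False
    by (rule grigorieff_axiom_A.inconsistent)
qed

end
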